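(* A finite-dimensional topological manifold, or a finite-dimensional CW complex, has the homotopy fixed point property only if it is a singleton.
   Context: A topological space $X$ has the homotopy fixed point property if for every continuous map $f\colon I\times X\to X$, where $I=[0,1]$, there exists a continuous map $p\colon I\to X$ with $f(t,p(t))=p(t)$ for all $t\in I$. *)

theory Defs
  imports "HOL-Analysis.Analysis"
begin

definition homotopy_fixed_point_property :: "'a topology \<Rightarrow> bool" where
  "homotopy_fixed_point_property X \<longleftrightarrow>
     (\<forall>f. continuous_map (prod_topology (top_of_set {0..1::real}) X) X f \<longrightarrow>
        (\<exists>p. continuous_map (top_of_set {0..1::real}) X p \<and>
             (\<forall>t\<in>{0..1::real}. f (t, p t) = p t)))"

definition finite_dim_topological_manifold :: "'a topology \<Rightarrow> bool" where
  "finite_dim_topological_manifold X \<longleftrightarrow>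
     Hausdorff_space X \<and> second_countable X \<and>
     (\<exists>n. \<forall>x\<in>topspace X. \<exists>U V. openin X U \<and> x \<in> U \<and>
          openin (Euclidean_space n) V \<and>
          subtopology X U homeomorphic_space subtopology (Euclidean_space n) V)"

definition cw_disc :: "nat \<Rightarrow> (nat \<Rightarrow> real) set" where
  "cw_disc n = {x. (\<forall>i\<ge>n. x i = 0) \<and> (\<Sum>i<n. (x i)\<^sup>2) \<le> 1}"

definition cw_open_disc :: "nat \<Rightarrow> (nat \<Rightarrow> real) set" where
  "cw_open_disc n = {x. (\<forall>i\<ge>n. x i = 0) \<and> (\<Sum>i<n. (x i)\<^sup>2) < 1}"

definition cw_sphere :: "nat \<Rightarrow> (nat \<Rightarrow> real) set" where
  "cw_sphere n = {x. (\<forall>i\<ge>n. x i = 0) \<and> (\<Sum>i<n. (x i)\<^sup>2) = 1}"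

definition finite_dim_CW_complex :: "'a topology \<Rightarrow> bool" where
  "finite_dim_CW_complex X \<longleftrightarrow>
     Hausdorff_space X \<and>
     (\<exists>(E :: 'a set set) (d :: 'a set \<Rightarrow> nat) (\<phi> :: 'a set \<Rightarrow> (nat \<Rightarrow> real) \<Rightarrow> 'a) (N :: nat).
        pairwise disjnt E \<and> \<Union>E = topspace X \<and> {} \<notin> E \<and>
        (\<forall>e\<in>E. d e \<le> N \<and>
           continuous_map (subtopology (Euclidean_space (d e)) (cw_disc (d e))) X (\<phi> e) \<and>
           \<phi> e ` cw_open_disc (d e) = e \<and>
           homeomorphic_map (subtopology (Euclidean_space (d e)) (cw_open_disc (d e)))
                            (subtopology X e) (\<phi> e) \<and>
           \<phi> e ` cw_sphere (d e) \<subseteq> \<Union>{e'\<in>E. d e' < d e} \<and>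
           finite {e'\<in>E. e' \<inter> \<phi> e ` cw_disc (d e) \<noteq> {}}) \<and>
        (\<forall>C. C \<subseteq> topspace X \<longrightarrow>
           (closedin X C \<longleftrightarrow> (\<forall>e\<in>E. closedin X (C \<inter> \<phi> e ` cw_disc (d e))))))"

end

theory Submission
  imports Defs
begin

text \<open>On the unit interval there is a homotopy whose fixed points form a Z-shaped curve over the
  time axis, so no continuous path of fixed points exists; through a retraction this transfers to
  every space \<open>X\<close> of which \<open>[0,1]\<close> is a retract.  A nonempty finite-dimensional manifold or
  CW complex is either discrete, where swapping two points is a map without fixed points unless
  the space is a point, or it contains an open set homeomorphic to an open subset of \<open>\<real>\<^sup>n\<close>
  with \<open>n \<ge> 1\<close> (a chart, resp. a cell of top dimension, which is open by the weak topology).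
  In the latter case a bump function in the chart, extended by zero, retracts \<open>X\<close> onto a short
  segment.\<close>

definition clamp01 :: "real \<Rightarrow> real" where
  "clamp01 z = max 0 (min 1 z)"

definition zigzag :: "real \<Rightarrow> real" where
  "zigzag y = max (2 - 5*y) (min y (4 - 5*y))"

definition zigzag_homotopy :: "real \<Rightarrow> real \<Rightarrow> real" where
  "zigzag_homotopy t z = clamp01 (clamp01 z + zigzag (clamp01 z) - t)"

lemma zigzag_homotopy_in_unit_interval: "zigzag_homotopy t z \<in> {0..1}"
  by (simp add: zigzag_homotopy_def clamp01_def)

lemma continuous_map_zigzag_homotopy:
  assumes "continuous_map Z euclideanreal a" "continuous_map Z euclideanreal b"
  shows "continuous_map Z euclideanreal (\<lambda>z. zigzag_homotopy (a z) (b z))"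
  unfolding zigzag_homotopy_def clamp01_def zigzag_def
  by (intro continuous_intros continuous_map_real_mult_left assms)

lemma zigzag_homotopy_fixed_pointD:
  assumes "t \<in> {0..1}" "zigzag_homotopy t c = c"
  shows "c \<in> {0..1} \<and> zigzag c = t"
proof -
  have c: "c \<in> {0..1}" using assms(2) zigzag_homotopy_in_unit_interval by metis
  then have "c = clamp01 (c + zigzag c - t)"
    using assms(2) by (simp add: zigzag_homotopy_def clamp01_def)
  then show ?thesis using c assms(1)
    unfolding clamp01_def zigzag_def by (auto simp: max_def min_def split: if_splits)
qed

text \<open>The fixed points of \<open>zigzag_homotopy t\<close> are the solutions of \<open>zigzag c = t\<close>;
  as \<open>zigzag\<close> falls to \<open>1/3\<close>, rises to \<open>2/3\<close> and falls again, they form a Z-shaped curve.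
  A path of fixed points starts above \<open>2/3\<close> and ends below \<open>1/3\<close>, so it must reach the
  value \<open>1/3\<close>, which only happens at time \<open>1/3\<close>, and before that the value \<open>2/3\<close>, which
  only happens at time \<open>2/3\<close>.\<close>
lemma no_fixed_point_path_zigzag_homotopy:
  assumes cont: "continuous_on {0..1} q" and fixed: "\<forall>t\<in>{0..1}. zigzag_homotopy t (q t) = q t"
  shows False
proof -
  have zq: "t \<in> {0..1} \<Longrightarrow> zigzag (q t) = t" and q01: "t \<in> {0..1} \<Longrightarrow> q t \<in> {0..1}" for t
    using zigzag_homotopy_fixed_pointD fixed by blast+
  have q0: "q 0 > 2/3" and q1: "q 1 < 1/3"
    using zq[of 0] zq[of 1] q01[of 0] q01[of 1] unfolding zigzag_def
    by (auto simp: max_def min_def split: if_splits)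
  obtain s where s: "0 \<le> s" "s \<le> 1" "q s = 1/3"
    using IVT2'[of q 1 "1/3" 0] q0 q1 cont by force
  then have "s = 1/3" using zq[of s] by (simp add: zigzag_def)
  with s have q13: "q (1/3) = 1/3" by simp
  obtain s' where s': "0 \<le> s'" "s' \<le> 1/3" "q s' = 2/3"
    using IVT2'[of q "1/3" "2/3" 0] q0 q13 continuous_on_subset[OF cont, of "{0..1/3}"] by force
  then have "s' = 2/3" using zq[of s'] by (simp add: zigzag_def)
  with s' show False by simp
qed

definition interval_retract :: "'a topology \<Rightarrow> bool" where
  "interval_retract X \<longleftrightarrow>
     (\<exists>g h. continuous_map X euclideanreal g \<and> continuous_map (top_of_set {0..1::real}) X h \<and>
            (\<forall>s\<in>{0..1}. g (h s) = s))"

lemma interval_retract_imp_not_homotopy_fixed_point_property: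
  assumes "interval_retract X"
  shows "\<not> homotopy_fixed_point_property X"
proof
  assume HF: "homotopy_fixed_point_property X"
  obtain g h where g: "continuous_map X euclideanreal g"
    and h: "continuous_map (top_of_set {0..1::real}) X h" and gh: "\<forall>s\<in>{0..1}. g (h s) = s"
    using assms unfolding interval_retract_def by blast
  let ?P = "prod_topology (top_of_set {0..1::real}) X"
  have "continuous_map ?P euclideanreal (\<lambda>z. zigzag_homotopy (fst z) (g (snd z)))"
  proof (rule continuous_map_zigzag_homotopy)
    show "continuous_map ?P euclideanreal fst"
      using continuous_map_fst continuous_map_into_fulltopology by blast
    show "continuous_map ?P euclideanreal (\<lambda>z. g (snd z))"
      using continuous_map_compose[OF continuous_map_snd g] by (simp add: o_def)
  qed
  then have "continuous_map ?P (top_of_set {0..1}) (\<lambda>z. zigzag_homotopy (fst z) (g (snd z)))"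
    using zigzag_homotopy_in_unit_interval
    by (simp add: continuous_map_in_subtopology image_subset_iff)
  then have "continuous_map ?P X (\<lambda>z. h (zigzag_homotopy (fst z) (g (snd z))))"
    using continuous_map_compose[OF _ h] by (simp add: o_def)
  from HF[unfolded homotopy_fixed_point_property_def, rule_format, OF this]
  obtain p where p: "continuous_map (top_of_set {0..1::real}) X p"
    and fixed: "\<forall>t\<in>{0..1::real}. h (zigzag_homotopy t (g (p t))) = p t"
    by auto
  have "continuous_on {0..1} (g \<circ> p)"
    using continuous_map_compose[OF p g] by (simp add: continuous_map_iff_continuous)
  moreover have "zigzag_homotopy t ((g \<circ> p) t) = (g \<circ> p) t" if "t \<in> {0..1}" for t
  proof -
    have "(g \<circ> p) t = g (h (zigzag_homotopy t (g (p t))))" using fixed that by simp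
    also have "\<dots> = zigzag_homotopy t (g (p t))"
      using gh zigzag_homotopy_in_unit_interval by blast
    finally show ?thesis by simp
  qed
  ultimately show False using no_fixed_point_path_zigzag_homotopy by blast
qed

lemma homotopy_fixed_point_property_nonempty:
  assumes "homotopy_fixed_point_property X"
  shows "topspace X \<noteq> {}"
proof
  assume "topspace X = {}"
  then have "continuous_map (prod_topology (top_of_set {0..1::real}) X) X (\<lambda>z. undefined)"
    by simp
  then obtain p where "continuous_map (top_of_set {0..1::real}) X p"
    using assms unfolding homotopy_fixed_point_property_def by blast
  then have "p 0 \<in> topspace X" by (simp add: continuous_map_def Pi_iff)
  with \<open>topspace X = {}\<close> show False by simp
qed

lemma homotopy_fixed_point_property_discrete_sing:
  assumes HF: "homotopy_fixed_point_property X" and discrete: "\<forall>x\<in>topspace X. openin X {x}"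
  shows "\<exists>a. topspace X = {a}"
proof (rule ccontr)
  assume "\<nexists>a. topspace X = {a}"
  then obtain a b where ab: "a \<in> topspace X" "b \<in> topspace X" "a \<noteq> b"
    using homotopy_fixed_point_property_nonempty[OF HF] by blast
  define swap where "swap x = (if x = a then b else a)" for x
  have "discrete_topology (topspace X) = X"
    using discrete discrete_topology_unique by blast
  moreover have "continuous_map (discrete_topology (topspace X)) X swap"
    using ab by (auto simp: swap_def)
  ultimately have "continuous_map X X swap" by simp
  then have "continuous_map (prod_topology (top_of_set {0..1::real}) X) X (swap \<circ> snd)"
    by (rule continuous_map_compose[OF continuous_map_snd])
  from HF[unfolded homotopy_fixed_point_property_def, rule_format, OF this]
  obtain p where "\<forall>t\<in>{0..1::real}. swap (p t) = p t"
    by auto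
  then show False using ab(3) by (metis atLeastAtMost_iff order_refl swap_def zero_le_one)
qed

definition Euclidean_cube :: "nat \<Rightarrow> (nat \<Rightarrow> real) \<Rightarrow> real \<Rightarrow> (nat \<Rightarrow> real) set" where
  "Euclidean_cube n c r = {y. (\<forall>i<n. \<bar>y i - c i\<bar> \<le> r) \<and> (\<forall>i\<ge>n. y i = 0)}"

lemma Euclidean_cube_subset_topspace: "Euclidean_cube n c r \<subseteq> topspace (Euclidean_space n)"
  by (auto simp: Euclidean_cube_def topspace_Euclidean_space)

lemma Euclidean_cube_eq_PiE:
  "Euclidean_cube n c r = Pi\<^sub>E UNIV (\<lambda>i. if i < n then {c i - r .. c i + r} else {0})"
  (is "?C = ?B")
proof (intro set_eqI iffI)
  fix y assume "y \<in> ?C" then show "y \<in> ?B" by (auto simp: Euclidean_cube_def abs_le_iff)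
next
  fix y assume y: "y \<in> ?B"
  have "i < n \<Longrightarrow> \<bar>y i - c i\<bar> \<le> r" "n \<le> i \<Longrightarrow> y i = 0" for i
    using PiE_mem[OF y, of i] by (auto simp: abs_le_iff)
  then show "y \<in> ?C" by (simp add: Euclidean_cube_def)
qed

lemma compactin_Euclidean_cube: "compactin (Euclidean_space n) (Euclidean_cube n c r)"
proof -
  have "compactin (powertop_real UNIV) (Euclidean_cube n c r)"
    unfolding Euclidean_cube_eq_PiE by (subst compactin_PiE) auto
  then show ?thesis
    using Euclidean_cube_subset_topspace[of n c r]
    by (simp add: Euclidean_space_def compactin_subtopology)
qed

lemma openin_Euclidean_space_contains_cube:
  assumes V: "openin (Euclidean_space n) V" and v: "v \<in> V"
  obtains r where "r > 0" "Euclidean_cube n v r \<subseteq> V"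
proof -
  obtain W where W: "openin (powertop_real UNIV) W" "V = W \<inter> topspace (Euclidean_space n)"
    using V unfolding Euclidean_space_def openin_subtopology by auto
  obtain U where U: "\<And>i. open (U i)" "\<And>i. v i \<in> U i" "Pi\<^sub>E UNIV U \<subseteq> W"
    using W v unfolding openin_product_topology_alt by (fastforce simp: PiE_iff)
  have "\<forall>i. \<exists>e>0. cball (v i) e \<subseteq> U i"
    using U open_contains_cball by blast
  then obtain ee where ee: "\<And>i. ee i > 0 \<and> cball (v i) (ee i) \<subseteq> U i"
    by metis
  define r where "r = Min (insert 1 (ee ` {..<n}))"
  have "r > 0" unfolding r_def using ee by (subst Min_gr_iff) auto
  moreover have "Euclidean_cube n v r \<subseteq> V"
  proof
    fix y assume y: "y \<in> Euclidean_cube n v r"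
    have "y i \<in> U i" for i
    proof (cases "i < n")
      case True
      then have "r \<le> ee i" unfolding r_def by (intro Min_le) auto
      with True y have "y i \<in> cball (v i) (ee i)"
        by (auto simp: Euclidean_cube_def dist_real_def abs_minus_commute)
      with ee show ?thesis by blast
    next
      case False
      then have "y i = v i" using y v W(2) by (auto simp: Euclidean_cube_def topspace_Euclidean_space)
      with U(2) show ?thesis by simp
    qed
    then have "y \<in> W" using U(3) by auto
    then show "y \<in> V" using W(2) y Euclidean_cube_subset_topspace by blast
  qed
  ultimately show ?thesis by (rule that)
qed

lemma continuous_map_Euclidean_space_coordinate:
  "continuous_map (Euclidean_space n) euclideanreal (\<lambda>y. y i)"
  unfolding Euclidean_space_def
  by (intro continuous_map_from_subtopology continuous_map_product_projection) simp

lemma continuous_map_extend_outside_compact: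
  assumes X: "Hausdorff_space X" "openin X U"
    and K: "compactin X K" "K \<subseteq> U"
    and f: "continuous_map (subtopology X U) Y f" and c: "c \<in> topspace Y"
    and f_outside: "\<And>x. x \<in> U - K \<Longrightarrow> f x = c"
  shows "continuous_map X Y (\<lambda>x. if x \<in> U then f x else c)"
proof (rule pasting_lemma[where I = "UNIV::bool set" and T = "\<lambda>b. if b then U else topspace X - K"
        and f = "\<lambda>b. if b then f else (\<lambda>x. c)"])
  show "openin X (if b then U else topspace X - K)" for b
    using X K compactin_imp_closedin by auto
  show "continuous_map (subtopology X (if b then U else topspace X - K)) Y (if b then f else (\<lambda>x. c))" for b
    using f c by auto
  show "(if i then f else (\<lambda>x. c)) x = (if j then f else (\<lambda>x. c)) x"
    if "x \<in> topspace X \<inter> (if i then U else topspace X - K) \<inter> (if j then U else topspace X - K)" for i j x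
    using that f_outside by (cases i; cases j) auto
  show "\<exists>j. j \<in> UNIV \<and> x \<in> (if j then U else topspace X - K) \<and>
          (if x \<in> U then f x else c) = (if j then f else (\<lambda>x. c)) x" if "x \<in> topspace X" for x
    using that K(2) by (cases "x \<in> U") auto
qed

lemma interval_retract_from_open_chart:
  assumes X: "Hausdorff_space X" "openin X U"
    and hm: "homeomorphic_maps (subtopology X U) (subtopology Y V) k k'"
    and C: "compactin Y C" "C \<subseteq> V"
    and G: "continuous_map Y euclideanreal G" "\<And>z. z \<in> topspace Y - C \<Longrightarrow> G z = 0"
    and y: "continuous_map (top_of_set {0..1}) Y y" "\<And>s. s \<in> {0..1} \<Longrightarrow> y s \<in> C \<and> G (y s) = s"
  shows "interval_retract X"
proof -
  have k: "continuous_map (subtopology X U) (subtopology Y V) k"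
    and k': "continuous_map (subtopology Y V) (subtopology X U) k'"
    and kk': "\<And>z. z \<in> topspace Y \<inter> V \<Longrightarrow> k (k' z) = z"
    and k'k: "\<And>x. x \<in> U \<Longrightarrow> k' (k x) = x"
    using hm openin_subset[OF X(2)] unfolding homeomorphic_maps_def by (auto simp: Int_absorb1)
  have "compactin (subtopology Y V) C"
    using C by (simp add: compactin_subtopology)
  then have "compactin (subtopology X U) (k' ` C)"
    using k' image_compactin by blast
  then have K: "compactin X (k' ` C)" "k' ` C \<subseteq> U"
    by (auto simp: compactin_subtopology)
  define g where "g x = (if x \<in> U then G (k x) else 0)" for x
  have "continuous_map X euclideanreal g"
    unfolding g_def
  proof (rule continuous_map_extend_outside_compact[OF X K])
    show "continuous_map (subtopology X U) euclideanreal (\<lambda>x. G (k x))"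
      using continuous_map_compose[OF continuous_map_into_fulltopology[OF k] G(1)] by (simp add: o_def)
    show "G (k x) = 0" if "x \<in> U - k' ` C" for x
    proof (rule G(2))
      have "k x \<in> topspace Y" using k that openin_subset[OF X(2)] by (auto simp: continuous_map_def Pi_iff)
      moreover have "k x \<notin> C" using that k'k by force
      ultimately show "k x \<in> topspace Y - C" by blast
    qed
  qed simp
  moreover have "continuous_map (top_of_set {0..1}) X (k' \<circ> y)"
  proof -
    have "continuous_map (top_of_set {0..1}) (subtopology Y V) y"
      using y C by (auto simp: continuous_map_in_subtopology)
    then show ?thesis
      using continuous_map_compose[OF _ k'] continuous_map_into_fulltopology by blast
  qed
  moreover have "g ((k' \<circ> y) s) = s" if "s \<in> {0..1}" for s
  proof -
    have ys: "y s \<in> topspace Y \<inter> V"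
      using y(2)[OF that] C compactin_subset_topspace by blast
    then have "k' (y s) \<in> U" using k' by (auto simp: continuous_map_def Pi_iff)
    then show ?thesis using kk'[OF ys] y(2)[OF that] by (simp add: g_def)
  qed
  ultimately show ?thesis
    unfolding interval_retract_def by blast
qed

text \<open>\<open>G\<close> grows linearly along the segment from \<open>v\<close> in the first coordinate direction,
  reading off its parameter, and is cut off by the \<open>\<ell>\<^sup>1\<close>-distance to \<open>v\<close>, so it vanishes
  outside the cube.\<close>
lemma Euclidean_space_bump_segment:
  assumes r: "r > 0" and n: "n \<ge> 1" and v: "v \<in> topspace (Euclidean_space n)"
  obtains G y where "continuous_map (Euclidean_space n) euclideanreal G"
    "\<And>z. z \<in> topspace (Euclidean_space n) - Euclidean_cube n v r \<Longrightarrow> G z = 0"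
    "continuous_map (top_of_set {0..1}) (Euclidean_space n) y"
    "\<And>s. s \<in> {0..1} \<Longrightarrow> y s \<in> Euclidean_cube n v r \<and> G (y s) = s"
proof
  define \<delta> where "\<delta> = r / 2"
  have \<delta>: "\<delta> > 0" using r by (simp add: \<delta>_def)
  define N where "N z = (\<Sum>i<n. \<bar>z i - v i\<bar>)" for z :: "nat \<Rightarrow> real"
  define G where "G z = max 0 (min ((z 0 - v 0) / \<delta>) (2 - N z / \<delta>))" for z
  define y where "y s = (\<lambda>i. if i = 0 then v 0 + s * \<delta> else v i)" for s
  have v0: "\<forall>i\<ge>n. v i = 0" using v by (simp add: topspace_Euclidean_space)
  show "continuous_map (Euclidean_space n) euclideanreal G"
    unfolding G_def N_def using \<delta>
    by (intro continuous_intros continuous_map_Euclidean_space_coordinate) auto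
  show "G z = 0" if "z \<in> topspace (Euclidean_space n) - Euclidean_cube n v r" for z
  proof -
    have "\<not> (\<forall>i<n. \<bar>z i - v i\<bar> \<le> r)"
      using that by (auto simp: Euclidean_cube_def topspace_Euclidean_space)
    then obtain i where "i < n" "\<bar>z i - v i\<bar> > r"
      by (auto simp: not_le)
    then have "N z > 2 * \<delta>"
      using member_le_sum[of i "{..<n}" "\<lambda>i. \<bar>z i - v i\<bar>"] by (simp add: N_def \<delta>_def)
    then have "2 - N z / \<delta> < 0" using \<delta> by (simp add: field_simps)
    then show ?thesis by (simp add: G_def)
  qed
  have "y = (\<lambda>s i. if i < n then y s i else 0)" using n v0 by (auto simp: y_def fun_eq_iff)
  moreover have "continuous_map (top_of_set {0..1}) (Euclidean_space n) (\<lambda>s i. if i < n then y s i else 0)"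
    unfolding continuous_map_componentwise_Euclidean_space y_def
    by (auto intro!: continuous_intros continuous_map_real_mult_right)
  ultimately show "continuous_map (top_of_set {0..1}) (Euclidean_space n) y" by simp
  show "y s \<in> Euclidean_cube n v r \<and> G (y s) = s" if s: "s \<in> {0..1}" for s
  proof
    show "y s \<in> Euclidean_cube n v r"
      using s n r v0 by (auto simp: Euclidean_cube_def y_def \<delta>_def abs_mult)
    have "N (y s) = (\<Sum>i<n. if i = 0 then \<bar>s * \<delta>\<bar> else 0)"
      unfolding N_def y_def by (intro sum.cong) auto
    also have "\<dots> = s * \<delta>" using n s \<delta> by (simp add: abs_mult)
    finally show "G (y s) = s" using s \<delta> by (simp add: G_def y_def)
  qed
qed

lemma interval_retract_from_Euclidean_chart:
  assumes X: "Hausdorff_space X" "openin X U"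
    and V: "openin (Euclidean_space n) V" "v \<in> V" and n: "n \<ge> 1"
    and hm: "homeomorphic_maps (subtopology X U) (subtopology (Euclidean_space n) V) k k'"
  shows "interval_retract X"
proof -
  obtain r where "r > 0" and cube: "Euclidean_cube n v r \<subseteq> V"
    using openin_Euclidean_space_contains_cube[OF V] .
  moreover have "v \<in> topspace (Euclidean_space n)" using V openin_subset by blast
  ultimately obtain G y where "continuous_map (Euclidean_space n) euclideanreal G"
    "\<And>z. z \<in> topspace (Euclidean_space n) - Euclidean_cube n v r \<Longrightarrow> G z = 0"
    "continuous_map (top_of_set {0..1}) (Euclidean_space n) y"
    "\<And>s. s \<in> {0..1} \<Longrightarrow> y s \<in> Euclidean_cube n v r \<and> G (y s) = s"
    using Euclidean_space_bump_segment n by metis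
  then show ?thesis
    using interval_retract_from_open_chart[OF X hm compactin_Euclidean_cube cube] by blast
qed

lemma Euclidean_chart_dim0_singleton:
  assumes hm: "subtopology X U homeomorphic_space subtopology (Euclidean_space 0) V"
    and U: "U \<subseteq> topspace X" "x \<in> U"
  shows "U = {x}"
proof -
  obtain k k' where k: "continuous_map (subtopology X U) (subtopology (Euclidean_space 0) V) k"
    and k'k: "\<And>u. u \<in> U \<Longrightarrow> k' (k u) = u"
    using hm U(1) unfolding homeomorphic_space_def homeomorphic_maps_def by (auto simp: Int_absorb1)
  have k0: "k u = (\<lambda>i. 0)" if "u \<in> U" for u
    using k that U(1) by (force simp: continuous_map_def topspace_Euclidean_space Pi_iff)
  have "u = x" if "u \<in> U" for u
    using k'k[OF that] k'k[OF U(2)] k0[OF that] k0[OF U(2)] by simp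
  with U(2) show ?thesis by blast
qed

lemma manifold_discrete_or_interval_retract:
  assumes M: "finite_dim_topological_manifold X" and ne: "topspace X \<noteq> {}"
  shows "(\<forall>x\<in>topspace X. openin X {x}) \<or> interval_retract X"
proof -
  have Hs: "Hausdorff_space X"
    using M by (simp add: finite_dim_topological_manifold_def)
  obtain n where charts: "\<forall>x\<in>topspace X. \<exists>U V. openin X U \<and> x \<in> U \<and>
      openin (Euclidean_space n) V \<and> subtopology X U homeomorphic_space subtopology (Euclidean_space n) V"
    using M unfolding finite_dim_topological_manifold_def by blast
  show ?thesis
  proof (cases "n = 0")
    case True
    have "openin X {x}" if x: "x \<in> topspace X" for x
    proof -
      obtain U V where U: "openin X U" "x \<in> U"
        and hm: "subtopology X U homeomorphic_space subtopology (Euclidean_space 0) V"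
        using charts x True by blast
      then show ?thesis using Euclidean_chart_dim0_singleton[OF hm openin_subset] by simp
    qed
    then show ?thesis by blast
  next
    case False
    obtain x where "x \<in> topspace X" using ne by blast
    then obtain U V where U: "openin X U" "x \<in> U" and V: "openin (Euclidean_space n) V"
      and "subtopology X U homeomorphic_space subtopology (Euclidean_space n) V"
      using charts by blast
    then obtain k k' where hm: "homeomorphic_maps (subtopology X U) (subtopology (Euclidean_space n) V) k k'"
      unfolding homeomorphic_space_def by blast
    have "k x \<in> V"
      using hm U openin_subset[OF U(1)] by (auto simp: homeomorphic_maps_def continuous_map_def Pi_iff)
    then show ?thesis
      using interval_retract_from_Euclidean_chart[OF Hs U(1) V _ _ hm] False by auto
  qed
qed

lemma continuous_map_Euclidean_space_norm2:
  "continuous_map (Euclidean_space m) euclideanreal (\<lambda>y. \<Sum>i<m. (y i)\<^sup>2)"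
  by (intro continuous_intros continuous_map_Euclidean_space_coordinate) auto

lemma cw_disc_subset_topspace: "cw_disc m \<subseteq> topspace (Euclidean_space m)"
  by (auto simp: cw_disc_def topspace_Euclidean_space)

lemma cw_sphere_subset_disc: "cw_sphere m \<subseteq> cw_disc m"
  by (auto simp: cw_sphere_def cw_disc_def)

lemma cw_disc_eq_open_disc_Un_sphere: "cw_disc m = cw_open_disc m \<union> cw_sphere m"
  by (auto simp: cw_sphere_def cw_disc_def cw_open_disc_def)

lemma openin_cw_open_disc: "openin (Euclidean_space m) (cw_open_disc m)"
proof -
  have "cw_open_disc m = {y \<in> topspace (Euclidean_space m). (\<Sum>i<m. (y i)\<^sup>2) \<in> {..<1}}"
    by (auto simp: cw_open_disc_def topspace_Euclidean_space)
  then show ?thesis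
    by (simp only:) (rule openin_continuous_map_preimage[OF continuous_map_Euclidean_space_norm2], simp)
qed

lemma compactin_cw_disc: "compactin (Euclidean_space m) (cw_disc m)"
proof (rule closed_compactin[OF compactin_Euclidean_cube])
  show "cw_disc m \<subseteq> Euclidean_cube m (\<lambda>i. 0) 1"
  proof
    fix y assume y: "y \<in> cw_disc m"
    have "(y i)\<^sup>2 \<le> 1" if "i < m" for i
      using y member_le_sum[of i "{..<m}" "\<lambda>i. (y i)\<^sup>2"] that by (auto simp: cw_disc_def)
    then show "y \<in> Euclidean_cube m (\<lambda>i. 0) 1"
      using y by (auto simp: Euclidean_cube_def cw_disc_def abs_square_le_1)
  qed
  have "cw_disc m = {y \<in> topspace (Euclidean_space m). (\<Sum>i<m. (y i)\<^sup>2) \<in> {..1}}"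
    by (auto simp: cw_disc_def topspace_Euclidean_space)
  then show "closedin (Euclidean_space m) (cw_disc m)"
    by (simp only:) (rule closedin_continuous_map_preimage[OF continuous_map_Euclidean_space_norm2], simp)
qed

lemma compactin_cw_sphere: "compactin (Euclidean_space m) (cw_sphere m)"
proof (rule closed_compactin[OF compactin_cw_disc cw_sphere_subset_disc])
  have "cw_sphere m = {y \<in> topspace (Euclidean_space m). (\<Sum>i<m. (y i)\<^sup>2) \<in> {1}}"
    by (auto simp: cw_sphere_def topspace_Euclidean_space)
  then show "closedin (Euclidean_space m) (cw_sphere m)"
    by (simp only:) (rule closedin_continuous_map_preimage[OF continuous_map_Euclidean_space_norm2], simp)
qed

text \<open>The complement of a top-dimensional cell meets every closed cell in a compact set: the
  boundary sphere for the cell itself, the whole closed cell for the others.\<close>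
lemma openin_top_dimensional_cell:
  assumes Hs: "Hausdorff_space X"
    and E: "pairwise disjnt E" "\<Union>E = topspace X" "e0 \<in> E"
    and top: "\<And>e. e \<in> E \<Longrightarrow> d e \<le> d e0"
    and \<phi>: "\<And>e. e \<in> E \<Longrightarrow> continuous_map (subtopology (Euclidean_space (d e)) (cw_disc (d e))) X (\<phi> e)"
    and cell: "\<And>e. e \<in> E \<Longrightarrow> \<phi> e ` cw_open_disc (d e) = e"
    and boundary: "\<And>e. e \<in> E \<Longrightarrow> \<phi> e ` cw_sphere (d e) \<subseteq> \<Union>{e'\<in>E. d e' < d e}"
    and weak: "\<And>C. C \<subseteq> topspace X \<Longrightarrow> (\<forall>e\<in>E. closedin X (C \<inter> \<phi> e ` cw_disc (d e))) \<Longrightarrow> closedin X C"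
  shows "openin X e0"
proof -
  have disj: "e = e'" if "x \<in> e" "x \<in> e'" "e \<in> E" "e' \<in> E" for x e e'
    using E(1) that unfolding pairwise_def disjnt_def by blast
  have boundary_e0: "\<phi> e ` cw_sphere (d e) \<inter> e0 = {}" if e: "e \<in> E" for e
  proof -
    have "x \<notin> e0" if "x \<in> e'" "e' \<in> E" "d e' < d e" for x e'
      using disj[OF that(1) _ that(2) E(3)] top[OF e] that(3) by auto
    then show ?thesis using boundary[OF e] by blast
  qed
  have closed_image: "closedin X (\<phi> e ` S)"
    if "e \<in> E" "S \<subseteq> cw_disc (d e)" "compactin (Euclidean_space (d e)) S" for e S
  proof -
    have "compactin (subtopology (Euclidean_space (d e)) (cw_disc (d e))) S"
      using that by (simp add: compactin_subtopology)
    then show ?thesis using image_compactin \<phi>[OF that(1)] compactin_imp_closedin Hs by blast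
  qed
  have image_disc: "\<phi> e ` cw_disc (d e) \<subseteq> topspace X" if "e \<in> E" for e
    using \<phi>[OF that] cw_disc_subset_topspace by (auto simp: continuous_map_def Pi_iff)
  have "closedin X ((topspace X - e0) \<inter> \<phi> e ` cw_disc (d e))" if e: "e \<in> E" for e
  proof (cases "e = e0")
    case True
    then have "(topspace X - e0) \<inter> \<phi> e ` cw_disc (d e) = \<phi> e ` cw_sphere (d e)"
      using cell[OF e] boundary_e0[OF e] image_disc[OF e] cw_sphere_subset_disc
      unfolding cw_disc_eq_open_disc_Un_sphere by blast
    then show ?thesis
      using closed_image[OF e cw_sphere_subset_disc compactin_cw_sphere] by simp
  next
    case False
    then have "\<phi> e ` cw_open_disc (d e) \<inter> e0 = {}"
      using cell[OF e] disj[OF _ _ e E(3)] by blast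
    then have "(topspace X - e0) \<inter> \<phi> e ` cw_disc (d e) = \<phi> e ` cw_disc (d e)"
      using boundary_e0[OF e] image_disc[OF e] unfolding cw_disc_eq_open_disc_Un_sphere by blast
    then show ?thesis
      using closed_image[OF e order_refl compactin_cw_disc] by simp
  qed
  then have "closedin X (topspace X - e0)" using weak by blast
  moreover have "e0 \<subseteq> topspace X" using E by blast
  ultimately show ?thesis by (simp add: closedin_def double_diff)
qed

lemma CW_discrete_or_interval_retract:
  assumes CW: "finite_dim_CW_complex X" and ne: "topspace X \<noteq> {}"
  shows "(\<forall>x\<in>topspace X. openin X {x}) \<or> interval_retract X"
proof -
  obtain E d \<phi> N where Hs: "Hausdorff_space X" and E: "pairwise disjnt E" "\<Union>E = topspace X"
    and dN: "\<forall>e\<in>E. d e \<le> N"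
    and \<phi>: "\<forall>e\<in>E. continuous_map (subtopology (Euclidean_space (d e)) (cw_disc (d e))) X (\<phi> e)"
    and cell: "\<forall>e\<in>E. \<phi> e ` cw_open_disc (d e) = e"
    and hm: "\<forall>e\<in>E. homeomorphic_map (subtopology (Euclidean_space (d e)) (cw_open_disc (d e)))
                            (subtopology X e) (\<phi> e)"
    and boundary: "\<forall>e\<in>E. \<phi> e ` cw_sphere (d e) \<subseteq> \<Union>{e'\<in>E. d e' < d e}"
    and weak: "\<forall>C. C \<subseteq> topspace X \<longrightarrow>
           (closedin X C \<longleftrightarrow> (\<forall>e\<in>E. closedin X (C \<inter> \<phi> e ` cw_disc (d e))))"
    using CW unfolding finite_dim_CW_complex_def ball_conj_distrib
    by (elim conjE exE) (rule that; assumption)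
  obtain e1 where "e1 \<in> E" using E(2) ne by blast
  then obtain e0 where e0: "e0 \<in> E" and top: "\<And>e. e \<in> E \<Longrightarrow> d e \<le> d e0"
    using Lattices_Big.ex_has_greatest_nat[of "\<lambda>e. e \<in> E" e1 d "Suc N"] dN by fastforce
  have open_cells: "openin X e" if "e \<in> E" "d e = d e0" for e
  proof (rule openin_top_dimensional_cell[OF Hs E that(1) _ \<phi>[rule_format] cell[rule_format]
        boundary[rule_format]])
    show "d e' \<le> d e" if "e' \<in> E" for e' using top[OF that] \<open>d e = d e0\<close> by simp
    show "closedin X C" if "C \<subseteq> topspace X" "\<forall>e\<in>E. closedin X (C \<inter> \<phi> e ` cw_disc (d e))" for C
      using weak that by blast
  qed
  show ?thesis
  proof (cases "d e0 = 0")
    case True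
    have "openin X {x}" if "x \<in> topspace X" for x
    proof -
      have "x \<in> \<Union>E" using that E(2) by simp
      then obtain e where e: "e \<in> E" "x \<in> e" by blast
      then have "d e = 0" using top True by fastforce
      moreover have "cw_open_disc 0 = {\<lambda>i. 0}" by (auto simp: cw_open_disc_def)
      ultimately have "e = {\<phi> e (\<lambda>i. 0)}" using bspec[OF cell e(1)] by simp
      then have "e = {x}" using e(2) by (metis singletonD)
      then show ?thesis using open_cells[OF e(1)] \<open>d e = 0\<close> True by simp
    qed
    then show ?thesis by blast
  next
    case False
    obtain k where k: "homeomorphic_maps (subtopology X e0)
        (subtopology (Euclidean_space (d e0)) (cw_open_disc (d e0))) k (\<phi> e0)"
      using hm e0 by (metis homeomorphic_map_maps homeomorphic_maps_sym)
    have "(\<lambda>i. 0) \<in> cw_open_disc (d e0)" by (simp add: cw_open_disc_def)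
    from interval_retract_from_Euclidean_chart[OF Hs open_cells[OF e0 refl] openin_cw_open_disc this _ k]
    show ?thesis using False by simp
  qed
qed

theorem corollary4p8:
  fixes X :: "'a topology"
  assumes "finite_dim_topological_manifold X \<or> finite_dim_CW_complex X"
    and "homotopy_fixed_point_property X"
  shows "\<exists>a. topspace X = {a}"
proof -
  have "topspace X \<noteq> {}"
    using assms(2) by (rule homotopy_fixed_point_property_nonempty)
  then have "(\<forall>x\<in>topspace X. openin X {x}) \<or> interval_retract X"
    using assms(1) manifold_discrete_or_interval_retract CW_discrete_or_interval_retract by blast
  then show ?thesis
    using assms(2) homotopy_fixed_point_property_discrete_sing
      interval_retract_imp_not_homotopy_fixed_point_property by blast
qed

end
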